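(* Let $n\ge2$ and $d>2$. Let $S=\{\mathbf{m}\in T_{n,d}:\max(\mathbf{m})\ge d-1\}$ and let $A\subseteq\mathbb{N}^n$ be the semigroup generated by $S$. Then $\mathcal{A}_{n,d}\setminus A$ is finite. More precisely, if $\mathbf{e}\in\mathcal{A}_{n,d}$ satisfies $\max(\mathbf{e})\ge(n-1)(d^2-d)$, then $\mathbf{e}\in A$. Consequently, for any semigroup $B$ generated by a set $U$ with $S\subseteq U\subseteq T_{n,d}$, the set $\mathcal{A}_{n,d}\setminus B$ is finite.
   Context: For $\mathbf{a}\in\mathbb{N}^n$, $|\mathbf{a}|=\sum_i a_i$ and $\max(\mathbf{a})=\max_i a_i$. $T_{n,d}=\{\mathbf{a}\in\mathbb{N}^n:|\mathbf{a}|=d\}$ and $\mathcal{A}_{n,d}$ is the additive semigroup generated by $T_{n,d}$. *)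

theory Defs
  imports Main
begin

text \<open>Vectors in N^n are represented as functions nat => nat vanishing at indices >= n.\<close>

definition vsum :: "nat \<Rightarrow> (nat \<Rightarrow> nat) \<Rightarrow> nat" where
  "vsum n a = (\<Sum>i<n. a i)"

definition vmax :: "nat \<Rightarrow> (nat \<Rightarrow> nat) \<Rightarrow> nat" where
  "vmax n a = Max (a ` {..<n})"

definition T :: "nat \<Rightarrow> nat \<Rightarrow> (nat \<Rightarrow> nat) set" where
  "T n d = {a. (\<forall>i\<ge>n. a i = 0) \<and> vsum n a = d}"

inductive_set sg :: "(nat \<Rightarrow> nat) set \<Rightarrow> (nat \<Rightarrow> nat) set" for G where
  gen: "a \<in> G \<Longrightarrow> a \<in> sg G"
| add: "a \<in> sg G \<Longrightarrow> b \<in> sg G \<Longrightarrow> (\<lambda>i. a i + b i) \<in> sg G"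

end

theory Submission
  imports Defs
begin

text \<open>Let \<open>e\<close> have degree divisible by \<open>d\<close> and let \<open>j\<close> be a coordinate where \<open>e\<close> is maximal.
  Write every other coordinate as \<open>e\<^sub>i = q\<^sub>i d + r\<^sub>i\<close> with \<open>r\<^sub>i < d\<close>, and cover it by \<open>q\<^sub>i\<close> copies
  of \<open>d \<epsilon>\<^sub>i\<close> and \<open>r\<^sub>i\<close> copies of \<open>(d - 1) \<epsilon>\<^sub>j + \<epsilon>\<^sub>i\<close>; both are generators of \<open>A\<close>. This uses up
  \<open>(d - 1) R\<close> of coordinate \<open>j\<close>, where \<open>R = \<Sum> r\<^sub>i \<le> (n - 1)(d - 1)\<close>, which is available once
  \<open>e\<^sub>j \<ge> (n - 1)(d - 1)\<^sup>2\<close>. The rest \<open>e\<^sub>j - (d - 1) R \<equiv> e\<^sub>j + R \<equiv> |e| \<equiv> 0 (mod d)\<close> is covered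
  by copies of \<open>d \<epsilon>\<^sub>j\<close>. Hence only vectors with all coordinates below the bound can be missing
  from \<open>A\<close>, and there are finitely many of them.\<close>

definition heavy :: "nat \<Rightarrow> nat \<Rightarrow> (nat \<Rightarrow> nat) set" where
  "heavy n d = {m \<in> T n d. d - 1 \<le> vmax n m}"

definition unit_vec :: "nat \<Rightarrow> nat \<Rightarrow> nat" where
  "unit_vec i = (\<lambda>k. if k = i then 1 else 0)"

text \<open>Admitting the empty sum lets coefficients in decompositions be zero.\<close>
definition monoid_gen :: "(nat \<Rightarrow> nat) set \<Rightarrow> (nat \<Rightarrow> nat) set" where
  "monoid_gen G = insert (\<lambda>_. 0) (sg G)"

definition residue_sum :: "nat \<Rightarrow> nat \<Rightarrow> nat \<Rightarrow> (nat \<Rightarrow> nat) \<Rightarrow> nat" where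
  "residue_sum n d j e = (\<Sum>i\<in>{..<n} - {j}. e i mod d)"

lemma sg_mono: "A \<subseteq> B \<Longrightarrow> sg A \<subseteq> sg B"
proof
  fix x assume "x \<in> sg A" and "A \<subseteq> B"
  then show "x \<in> sg B"
    by (induction rule: sg.induct) (auto intro: sg.intros)
qed

lemma vsum_add: "vsum n (\<lambda>i. a i + b i) = vsum n a + vsum n b"
  by (simp add: vsum_def sum.distrib)

lemma le_vmax: "i < n \<Longrightarrow> a i \<le> vmax n a"
  unfolding vmax_def by simp

lemma sg_T_D:
  assumes "e \<in> sg (T n d)"
  shows "\<forall>i\<ge>n. e i = 0" and "d dvd vsum n e" and "d \<le> vsum n e"
  using assms by (induction rule: sg.induct) (auto simp: T_def vsum_add)

lemma monoid_gen_add: "a \<in> monoid_gen G \<Longrightarrow> b \<in> monoid_gen G \<Longrightarrow> (\<lambda>k. a k + b k) \<in> monoid_gen G"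
  unfolding monoid_gen_def by (auto intro: sg.intros)

lemma monoid_gen_scale: "v \<in> G \<Longrightarrow> (\<lambda>k. c * v k) \<in> monoid_gen G"
proof (induction c)
  case 0
  then show ?case by (simp add: monoid_gen_def)
next
  case (Suc c)
  then have "v \<in> monoid_gen G" by (simp add: monoid_gen_def sg.gen)
  from monoid_gen_add[OF this Suc.IH[OF Suc.prems]] show ?case by simp
qed

lemma monoid_gen_sum:
  "finite I \<Longrightarrow> (\<And>i. i \<in> I \<Longrightarrow> f i \<in> monoid_gen G) \<Longrightarrow> (\<lambda>k. \<Sum>i\<in>I. f i k) \<in> monoid_gen G"
proof (induction I rule: finite_induct)
  case empty
  then show ?case by (simp add: monoid_gen_def)
next
  case (insert x F)
  then have "(\<lambda>k. f x k + (\<Sum>i\<in>F. f i k)) \<in> monoid_gen G"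
    by (intro monoid_gen_add) auto
  with insert show ?case by simp
qed

lemma vsum_scaled_unit_vec:
  assumes "i < n"
  shows "vsum n (\<lambda>k. c * unit_vec i k) = c"
proof -
  have "(\<lambda>k. c * unit_vec i k) = (\<lambda>k. if k = i then c else 0)"
    by (auto simp: unit_vec_def)
  then show ?thesis
    using assms by (simp add: vsum_def)
qed

lemma scaled_unit_vec_heavy:
  assumes "i < n"
  shows "(\<lambda>k. d * unit_vec i k) \<in> heavy n d"
proof -
  have "vsum n (\<lambda>k. d * unit_vec i k) = d"
    using assms by (rule vsum_scaled_unit_vec)
  moreover have "d - 1 \<le> vmax n (\<lambda>k. d * unit_vec i k)"
    using le_vmax[OF assms, of "\<lambda>k. d * unit_vec i k"] by (simp add: unit_vec_def)
  ultimately show ?thesis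
    using assms by (auto simp: heavy_def T_def unit_vec_def)
qed

lemma shifted_unit_vec_heavy:
  assumes "i < n" "j < n" "i \<noteq> j" "0 < d"
  shows "(\<lambda>k. (d - 1) * unit_vec j k + unit_vec i k) \<in> heavy n d"
proof -
  have "vsum n (\<lambda>k. (d - 1) * unit_vec j k + unit_vec i k) = d"
    using assms by (simp add: vsum_add vsum_scaled_unit_vec
        vsum_scaled_unit_vec[where c = 1, simplified])
  moreover have "d - 1 \<le> vmax n (\<lambda>k. (d - 1) * unit_vec j k + unit_vec i k)"
    using le_vmax[OF assms(2), of "\<lambda>k. (d - 1) * unit_vec j k + unit_vec i k"] assms(3)
    by (simp add: unit_vec_def)
  ultimately show ?thesis
    using assms by (auto simp: heavy_def T_def unit_vec_def)
qed

lemma degree_congruence: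
  assumes "j < n" and "0 < d" and "d dvd vsum n e" and "(d - 1) * residue_sum n d j e \<le> e j"
  shows "d dvd e j - (d - 1) * residue_sum n d j e"
proof -
  define R where "R = residue_sum n d j e"
  have "vsum n e = e j + (\<Sum>i\<in>{..<n} - {j}. e i)"
    using assms(1) by (simp add: vsum_def sum.remove)
  then have "(e j + R) mod d = vsum n e mod d"
    unfolding R_def residue_sum_def by (metis mod_add_right_eq mod_sum_eq)
  then have "d dvd (e j - (d - 1) * R) + d * R"
    using assms(2-4) unfolding R_def[symmetric]
    by (simp add: mod_eq_0_iff_dvd [symmetric] algebra_simps)
  then show ?thesis
    by (simp add: dvd_add_left_iff R_def)
qed

lemma residue_sum_le:
  assumes "j < n" and "0 < d"
  shows "residue_sum n d j e \<le> (n - 1) * (d - 1)"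
proof -
  have "e i mod d \<le> d - 1" for i
    using mod_less_divisor[OF assms(2), of "e i"] by linarith
  then have "residue_sum n d j e \<le> (\<Sum>i\<in>{..<n} - {j}. d - 1)"
    unfolding residue_sum_def by (intro sum_mono)
  then show ?thesis
    using assms(1) by simp
qed

lemma in_monoid_gen_heavy:
  assumes zero: "\<forall>i\<ge>n. e i = 0" and "j < n" and "0 < d"
    and le: "(d - 1) * residue_sum n d j e \<le> e j"
    and dvd: "d dvd e j - (d - 1) * residue_sum n d j e"
  shows "e \<in> monoid_gen (heavy n d)"
proof -
  define I where "I = {..<n} - {j}"
  define f where "f i = (\<lambda>k. e i mod d * ((d - 1) * unit_vec j k + unit_vec i k)
      + e i div d * (d * unit_vec i k))" for i
  obtain m where m: "e j = (d - 1) * residue_sum n d j e + d * m"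
    using le dvd by (metis dvd_def le_add_diff_inverse)
  have f_j: "(\<Sum>i\<in>I. f i j) = (d - 1) * residue_sum n d j e"
  proof -
    have "(\<Sum>i\<in>I. f i j) = (\<Sum>i\<in>I. (d - 1) * (e i mod d))"
      by (intro sum.cong) (auto simp: f_def unit_vec_def I_def)
    then show ?thesis
      by (simp add: residue_sum_def I_def sum_distrib_left)
  qed
  have f_other: "(\<Sum>i\<in>I. f i k) = e k" if "k \<noteq> j" for k
  proof -
    have "(\<Sum>i\<in>I. f i k) = (\<Sum>i\<in>I. if i = k then e i mod d + e i div d * d else 0)"
      using that by (intro sum.cong) (auto simp: f_def unit_vec_def)
    also have "\<dots> = (if k \<in> I then e k else 0)"
      by (simp add: I_def)
    finally show ?thesis
      using zero that by (auto simp: I_def)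
  qed
  have "e = (\<lambda>k. (\<Sum>i\<in>I. f i k) + m * (d * unit_vec j k))"
    using f_j f_other m by (auto simp: fun_eq_iff unit_vec_def)
  also have "\<dots> \<in> monoid_gen (heavy n d)"
  proof (intro monoid_gen_add monoid_gen_sum monoid_gen_scale scaled_unit_vec_heavy)
    fix i assume "i \<in> I"
    then have "i < n" "i \<noteq> j"
      by (auto simp: I_def)
    then show "f i \<in> monoid_gen (heavy n d)"
      unfolding f_def using assms(2,3)
      by (intro monoid_gen_add monoid_gen_scale scaled_unit_vec_heavy shifted_unit_vec_heavy)
  qed (auto simp: I_def assms(2))
  finally show ?thesis .
qed

lemma sg_T_in_sg_heavy:
  assumes "0 < d" and e: "e \<in> sg (T n d)" and big: "(n - 1) * (d^2 - d) \<le> vmax n e"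
  shows "e \<in> sg (heavy n d)"
proof -
  note e_props = sg_T_D[OF e]
  have "n \<noteq> 0"
    using e_props(3) assms(1) by (cases n) (auto simp: vsum_def)
  then have "vmax n e \<in> e ` {..<n}"
    unfolding vmax_def by (intro Max_in) auto
  then obtain j where "j < n" and ej: "e j = vmax n e"
    by auto
  have "(d - 1) * residue_sum n d j e \<le> (d - 1) * ((n - 1) * (d - 1))"
    using residue_sum_le[OF \<open>j < n\<close> assms(1)] by simp
  also have "\<dots> \<le> (n - 1) * (d * (d - 1))"
    by (simp add: mult.left_commute)
  also have "d * (d - 1) = d^2 - d"
    by (simp add: power2_eq_square diff_mult_distrib2)
  finally have le: "(d - 1) * residue_sum n d j e \<le> e j"
    using big ej by linarith
  have "e \<in> monoid_gen (heavy n d)"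
    using in_monoid_gen_heavy[OF e_props(1) \<open>j < n\<close> assms(1) le]
      degree_congruence[OF \<open>j < n\<close> assms(1) e_props(2) le] by blast
  moreover have "e \<noteq> (\<lambda>_. 0)"
    using e_props(3) assms(1) by (auto simp: vsum_def)
  ultimately show ?thesis
    by (simp add: monoid_gen_def)
qed

lemma finite_bounded_vectors: "finite {e :: nat \<Rightarrow> nat. (\<forall>i\<ge>n. e i = 0) \<and> (\<forall>i<n. e i < B)}"
  by (rule finite_subset[OF _ finite_set_of_finite_funs[of "{..<n}" "{..<B}" 0]]) auto

lemma finite_sg_T_diff_sg_heavy:
  assumes "0 < d"
  shows "finite (sg (T n d) - sg (heavy n d))"
proof (rule finite_subset[OF _ finite_bounded_vectors])
  show "sg (T n d) - sg (heavy n d)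
      \<subseteq> {e. (\<forall>i\<ge>n. e i = 0) \<and> (\<forall>i<n. e i < (n - 1) * (d^2 - d))}"
    using sg_T_in_sg_heavy[OF assms] sg_T_D(1) le_vmax
    by (fastforce simp: not_le intro: le_less_trans)
qed

theorem lemma5p1:
  fixes n d :: nat
  assumes "n \<ge> 2" and "d > 2"
  defines "S \<equiv> {m \<in> T n d. vmax n m \<ge> d - 1}"
  shows "finite (sg (T n d) - sg S)
     \<and> (\<forall>e \<in> sg (T n d). vmax n e \<ge> (n - 1) * (d^2 - d) \<longrightarrow> e \<in> sg S)
     \<and> (\<forall>U. S \<subseteq> U \<and> U \<subseteq> T n d \<longrightarrow> finite (sg (T n d) - sg U))"
proof -
  have S: "S = heavy n d" and "0 < d"
    using assms(2) by (auto simp: S_def heavy_def)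
  have "finite (sg (T n d) - sg U)" if "S \<subseteq> U" for U
    by (rule finite_subset[OF _ finite_sg_T_diff_sg_heavy[OF \<open>0 < d\<close>]])
      (use sg_mono[OF that] S in blast)
  then show ?thesis
    using finite_sg_T_diff_sg_heavy sg_T_in_sg_heavy \<open>0 < d\<close> by (auto simp: S)
qed

end
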